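(* Domineering on the $2 \times 5$ torus and on the $2 \times 9$ torus are second-player wins, and Domineering on the $2 \times 13$ torus is a win for Hepzibah regardless of who moves first.
   Context: Domineering: Vera places vertical dominoes (covering two vertically adjacent empty cells), Hepzibah places horizontal dominoes (covering two horizontally adjacent empty cells); players alternate, and a player who cannot move on her turn loses. The $2 \times n$ torus is the array of $2$ rows and $n$ columns of cells with both pairs of opposite edges identified, so horizontal adjacency wraps around from column $n$ to column $1$ (and a vertical domino occupies both cells of a column). *)

theory Defs
  imports Main
begin

text \<open>Domineering on the 2 x n torus. A cell is a pair (row, column) with
row in {0,1} and column in {0..<n}; a position is the set of occupied cells.\<close>

datatype player = Vera | Hepzibah

fun other :: "player \<Rightarrow> player" where
  "other Vera = Hepzibah"
| "other Hepzibah = Vera"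

definition moves :: "nat \<Rightarrow> player \<Rightarrow> (nat \<times> nat) set \<Rightarrow> (nat \<times> nat) set set" where
  "moves n p S =
     (case p of
        Vera \<Rightarrow> {S \<union> {(0, c), (1, c)} | c. c < n \<and> (0, c) \<notin> S \<and> (1, c) \<notin> S}
      | Hepzibah \<Rightarrow> {S \<union> {(r, c), (r, (c + 1) mod n)} | r c.
                      r < 2 \<and> c < n \<and> (r, c) \<notin> S \<and> (r, (c + 1) mod n) \<notin> S
                      \<and> (c + 1) mod n \<noteq> c})"

text \<open>wins_fuel n k p S: the player p to move at S has a winning strategy,
looking at most k moves ahead (normal play: no move means loss).\<close>

fun wins_fuel :: "nat \<Rightarrow> nat \<Rightarrow> player \<Rightarrow> (nat \<times> nat) set \<Rightarrow> bool" where
  "wins_fuel n 0 p S = False"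
| "wins_fuel n (Suc k) p S = (\<exists>S' \<in> moves n p S. \<not> wins_fuel n k (other p) S')"

text \<open>Every move covers two of the 2n cells, so a game lasts at most n moves;
fuel 2n+1 therefore makes the evaluation exact.\<close>

definition first_player_wins :: "nat \<Rightarrow> player \<Rightarrow> bool" where
  "first_player_wins n p = wins_fuel n (2 * n + 1) p {}"

definition second_player_win :: "nat \<Rightarrow> bool" where
  "second_player_win n = (\<not> first_player_wins n Vera \<and> \<not> first_player_wins n Hepzibah)"

definition hepzibah_win :: "nat \<Rightarrow> bool" where
  "hepzibah_win n = (first_player_wins n Hepzibah \<and> \<not> first_player_wins n Vera)"

end

theory Submission
  imports Defs
begin

text \<open>The game is finite, so the theorem is a finite computation, made feasible by two
observations. First, rotating the columns of the torus and exchanging its rows map dominoes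
to dominoes, hence preserve who wins; all opening moves of a player are equivalent, and a
second-player win only has to be shown after one opening move. Second, when positions are
encoded as pairs of boolean rows, the moves can be enumerated by list functions, and a
certificate naming a winning move wherever the player to move wins, and a winning answer to
every move wherever she loses, is checked by evaluation.\<close>

section \<open>Symmetries of the torus\<close>

definition board :: "nat \<Rightarrow> (nat \<times> nat) set" where
  "board n = {..<2} \<times> {..<n}"

fun dominoes :: "nat \<Rightarrow> player \<Rightarrow> (nat \<times> nat) set set" where
  "dominoes n Vera = {{(0, c), (1, c)} | c. c < n}"
| "dominoes n Hepzibah = {{(r, c), (r, (c + 1) mod n)} | r c. r < 2 \<and> c < n \<and> (c + 1) mod n \<noteq> c}"

lemma moves_eq_dominoes: "moves n p S = {S \<union> D | D. D \<in> dominoes n p \<and> D \<inter> S = {}}"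
  by (cases p) (auto simp: moves_def)

lemma dominoes_subset_board: "dominoes n p \<subseteq> Pow (board n)"
  by (cases p) (auto simp: board_def)

lemma moves_subset_board: "S \<subseteq> board n \<Longrightarrow> S' \<in> moves n p S \<Longrightarrow> S' \<subseteq> board n"
  using dominoes_subset_board unfolding moves_eq_dominoes by blast

definition preserves_dominoes :: "nat \<Rightarrow> (nat \<times> nat \<Rightarrow> nat \<times> nat) \<Rightarrow> bool" where
  "preserves_dominoes n \<sigma> \<longleftrightarrow>
     inj_on \<sigma> (board n) \<and> (\<forall>p. \<forall>D \<in> dominoes n p. \<sigma> ` D \<in> dominoes n p)"

lemma image_dominoes:
  assumes "preserves_dominoes n \<sigma>"
  shows "image \<sigma> ` dominoes n p = dominoes n p"
proof (rule endo_inj_surj)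
  show "finite (dominoes n p)"
    by (rule finite_subset[OF dominoes_subset_board]) (simp add: board_def)
  show "image \<sigma> ` dominoes n p \<subseteq> dominoes n p"
    using assms by (auto simp: preserves_dominoes_def)
  have "inj_on \<sigma> (board n)"
    using assms by (simp add: preserves_dominoes_def)
  then show "inj_on (image \<sigma>) (dominoes n p)"
    using inj_on_subset[OF inj_on_image_Pow dominoes_subset_board] by blast
qed

lemma moves_image:
  assumes \<sigma>: "preserves_dominoes n \<sigma>" and S: "S \<subseteq> board n"
  shows "moves n p (\<sigma> ` S) = image \<sigma> ` moves n p S"
proof -
  have inj: "inj_on \<sigma> (board n)"
    using \<sigma> by (simp add: preserves_dominoes_def)
  have disjoint: "\<sigma> ` D \<inter> \<sigma> ` S = {} \<longleftrightarrow> D \<inter> S = {}" if "D \<in> dominoes n p" for D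
  proof -
    have "\<sigma> ` D \<inter> \<sigma> ` S = \<sigma> ` (D \<inter> S)"
      using that dominoes_subset_board S by (auto intro!: inj_on_image_Int[OF inj, symmetric])
    then show ?thesis
      by simp
  qed
  have "moves n p (\<sigma> ` S) = {\<sigma> ` S \<union> E | E. E \<in> image \<sigma> ` dominoes n p \<and> E \<inter> \<sigma> ` S = {}}"
    by (simp add: moves_eq_dominoes image_dominoes[OF \<sigma>])
  also have "\<dots> = {\<sigma> ` (S \<union> D) | D. D \<in> dominoes n p \<and> D \<inter> S = {}}"
    using disjoint by (auto simp: image_Un)
  also have "\<dots> = image \<sigma> ` moves n p S"
    by (auto simp: moves_eq_dominoes)
  finally show ?thesis .
qed

lemma wins_fuel_image:
  assumes "preserves_dominoes n \<sigma>"
  shows "S \<subseteq> board n \<Longrightarrow> wins_fuel n k p (\<sigma> ` S) = wins_fuel n k p S"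
proof (induction k arbitrary: p S)
  case 0
  then show ?case by simp
next
  case (Suc k)
  then show ?case
    using moves_subset_board[OF Suc.prems] by (simp add: moves_image[OF assms])
qed

definition torus_shift :: "nat \<Rightarrow> bool \<Rightarrow> nat \<Rightarrow> nat \<times> nat \<Rightarrow> nat \<times> nat" where
  "torus_shift n flip t = (\<lambda>(r, c). (if flip then 1 - r else r, (c + t) mod n))"

lemma Suc_mod_eq_self_iff:
  fixes c n :: nat
  assumes "c < n"
  shows "Suc c mod n = c \<longleftrightarrow> n = 1"
proof (cases "Suc c < n")
  case True
  then show ?thesis by simp
next
  case False
  with assms have "Suc c = n" by simp
  then show ?thesis by auto
qed

lemma mod_add_right_cancel_nat: "(a + t) mod n = (b + t) mod n \<longleftrightarrow> a mod n = (b :: nat) mod n"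
  by (simp add: nat_mod_eq_iff)

lemma inj_on_torus_shift: "inj_on (torus_shift n flip t) (board n)"
proof (rule inj_onI, clarify)
  fix r c r' c'
  assume "(r, c) \<in> board n" "(r', c') \<in> board n"
    and "torus_shift n flip t (r, c) = torus_shift n flip t (r', c')"
  then have "r < 2" "r' < 2" "c < n" "c' < n"
    and "(if flip then 1 - r else r) = (if flip then 1 - r' else r')"
    and "(c + t) mod n = (c' + t) mod n"
    by (auto simp: board_def torus_shift_def)
  then show "r = r' \<and> c = c'"
    by (cases flip) (auto simp: mod_add_right_cancel_nat)
qed

lemma torus_shift_domino:
  assumes "D \<in> dominoes n p"
  shows "torus_shift n flip t ` D \<in> dominoes n p"
proof (cases p)
  case Vera
  with assms obtain c where "c < n" "D = {(0, c), (1, c)}"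
    by auto
  then have "torus_shift n flip t ` D = {(0, (c + t) mod n), (1, (c + t) mod n)}"
    by (auto simp: torus_shift_def)
  then show ?thesis
    unfolding Vera dominoes.simps using \<open>c < n\<close> by auto
next
  case Hepzibah
  with assms obtain r c
    where rc: "r < 2" "c < n" "(c + 1) mod n \<noteq> c" "D = {(r, c), (r, (c + 1) mod n)}"
    by auto
  define r' where "r' = (if flip then 1 - r else r)"
  define c' where "c' = (c + t) mod n"
  have "n \<noteq> 1"
    using Suc_mod_eq_self_iff[OF rc(2)] rc(3) by simp
  have "c' < n"
    using rc(2) by (simp add: c'_def)
  moreover have "(c' + 1) mod n \<noteq> c'"
    using Suc_mod_eq_self_iff[OF \<open>c' < n\<close>] \<open>n \<noteq> 1\<close> by simp
  moreover have "r' < 2"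
    using rc(1) unfolding r'_def by (cases flip) auto
  moreover have "torus_shift n flip t ` D = {(r', c'), (r', (c' + 1) mod n)}"
    using rc(4) by (simp add: torus_shift_def r'_def c'_def mod_Suc_eq mod_add_left_eq)
  ultimately show ?thesis
    unfolding Hepzibah dominoes.simps by blast
qed

lemma preserves_dominoes_torus_shift: "preserves_dominoes n (torus_shift n flip t)"
  by (simp add: preserves_dominoes_def inj_on_torus_shift torus_shift_domino)

lemma first_player_loses_if_openings_symmetric:
  assumes openings: "\<And>S. S \<in> moves n p {} \<Longrightarrow> \<exists>\<sigma>. preserves_dominoes n \<sigma> \<and> S = \<sigma> ` S\<^sub>0"
    and "S\<^sub>0 \<subseteq> board n" and "wins_fuel n k (other p) S\<^sub>0"
  shows "\<not> wins_fuel n (Suc k) p {}"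
proof -
  have "wins_fuel n k (other p) S" if "S \<in> moves n p {}" for S
    using openings[OF that] wins_fuel_image assms(2,3) by blast
  then show ?thesis
    by simp
qed

lemma Vera_first_loses:
  assumes "0 < n" and "wins_fuel n k Hepzibah {(0, 0), (1, 0)}"
  shows "\<not> wins_fuel n (Suc k) Vera {}"
proof (rule first_player_loses_if_openings_symmetric)
  fix S
  assume "S \<in> moves n Vera {}"
  then obtain c where "c < n" "S = {(0, c), (1, c)}"
    by (auto simp: moves_def)
  then have "S = torus_shift n False c ` {(0, 0), (1, 0)}"
    by (simp add: torus_shift_def)
  then show "\<exists>\<sigma>. preserves_dominoes n \<sigma> \<and> S = \<sigma> ` {(0, 0), (1, 0)}"
    using preserves_dominoes_torus_shift by blast
qed (use assms in \<open>auto simp: board_def\<close>)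

lemma Hepzibah_first_loses:
  assumes "2 \<le> n" and "wins_fuel n k Vera {(0, 0), (0, 1)}"
  shows "\<not> wins_fuel n (Suc k) Hepzibah {}"
proof (rule first_player_loses_if_openings_symmetric)
  fix S
  assume "S \<in> moves n Hepzibah {}"
  then obtain r c where "r < 2" "c < n" "S = {(r, c), (r, (c + 1) mod n)}"
    by (auto simp: moves_def)
  then have "S = torus_shift n (r = 1) c ` {(0, 0), (0, 1)}"
    by (auto simp: torus_shift_def add.commute)
  then show "\<exists>\<sigma>. preserves_dominoes n \<sigma> \<and> S = \<sigma> ` {(0, 0), (0, 1)}"
    using preserves_dominoes_torus_shift by blast
qed (use assms in \<open>auto simp: board_def\<close>)

section \<open>Positions as pairs of rows\<close>

definition row_cells :: "bool list \<Rightarrow> nat set" where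
  "row_cells xs = {c. c < length xs \<and> xs ! c}"

definition cells :: "bool list \<times> bool list \<Rightarrow> (nat \<times> nat) set" where
  "cells x = {0} \<times> row_cells (fst x) \<union> {1} \<times> row_cells (snd x)"

definition has_width :: "nat \<Rightarrow> bool list \<times> bool list \<Rightarrow> bool" where
  "has_width n x \<longleftrightarrow> length (fst x) = n \<and> length (snd x) = n"

fun vertical_moves :: "bool list \<Rightarrow> bool list \<Rightarrow> (bool list \<times> bool list) list" where
  "vertical_moves (a # as) (b # bs) =
     (if a \<or> b then [] else [(True # as, True # bs)]) @
     map (map_prod ((#) a) ((#) b)) (vertical_moves as bs)"
| "vertical_moves _ _ = []"

fun adjacent_moves :: "bool list \<Rightarrow> bool list list" where
  "adjacent_moves (a # b # xs) =
     (if a \<or> b then [] else [True # True # xs]) @ map ((#) a) (adjacent_moves (b # xs))"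
| "adjacent_moves _ = []"

definition wrap_moves :: "bool list \<Rightarrow> bool list list" where
  "wrap_moves xs =
     (if 2 \<le> length xs \<and> \<not> hd xs \<and> \<not> last xs then [True # butlast (tl xs) @ [True]] else [])"

definition row_moves :: "bool list \<Rightarrow> bool list list" where
  "row_moves xs = adjacent_moves xs @ wrap_moves xs"

fun next_positions :: "player \<Rightarrow> bool list \<times> bool list \<Rightarrow> (bool list \<times> bool list) list" where
  "next_positions Vera (t, b) = vertical_moves t b"
| "next_positions Hepzibah (t, b) = map (\<lambda>t'. (t', b)) (row_moves t) @ map (Pair t) (row_moves b)"

lemma ex_nat_0_or_Suc: "(\<exists>c :: nat. P c) \<longleftrightarrow> P 0 \<or> (\<exists>c. P (Suc c))"
  by (metis not0_implies_Suc)

lemma set_vertical_moves: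
  "set (vertical_moves t b) =
     {(t[c := True], b[c := True]) | c. c < length t \<and> c < length b \<and> \<not> t ! c \<and> \<not> b ! c}"
proof (induction t b rule: vertical_moves.induct)
  case (1 a as b bs)
  show ?case
    by (subst ex_nat_0_or_Suc) (auto simp: 1 image_iff)
qed auto

lemma set_adjacent_moves:
  "set (adjacent_moves xs) =
     {xs[c := True, Suc c := True] | c. Suc c < length xs \<and> \<not> xs ! c \<and> \<not> xs ! Suc c}"
proof (induction xs rule: adjacent_moves.induct)
  case (1 a b xs)
  show ?case
    by (subst ex_nat_0_or_Suc) (auto simp: 1 image_iff)
qed auto

lemma set_wrap_moves:
  fixes xs :: "bool list"
  defines "n \<equiv> length xs"
  shows "set (wrap_moves xs) =
    (if 2 \<le> n \<and> \<not> xs ! 0 \<and> \<not> xs ! (n - 1) then {xs[n - 1 := True, 0 := True]} else {})"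
proof (cases "2 \<le> n")
  case True
  then obtain a ys b where "xs = a # ys @ [b]"
    unfolding n_def
    by (metis Suc_le_length_iff numeral_2_eq_2 rev_exhaust list.distinct(1) append_Nil)
  then show ?thesis
    by (simp add: wrap_moves_def n_def list_update_append nth_append)
qed (simp add: wrap_moves_def n_def)

lemma set_row_moves:
  fixes xs :: "bool list"
  defines "n \<equiv> length xs"
  shows "set (row_moves xs) = {xs[c := True, (c + 1) mod n := True] | c.
           c < n \<and> \<not> xs ! c \<and> \<not> xs ! ((c + 1) mod n) \<and> (c + 1) mod n \<noteq> c}"
    (is "_ = ?R")
proof (rule set_eqI, rule iffI)
  fix ys
  assume "ys \<in> set (row_moves xs)"
  then consider
      (adjacent) c where "Suc c < n" "\<not> xs ! c" "\<not> xs ! Suc c" "ys = xs[c := True, Suc c := True]"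
    | (wrap) "2 \<le> n" "\<not> xs ! 0" "\<not> xs ! (n - 1)" "ys = xs[n - 1 := True, 0 := True]"
    unfolding row_moves_def set_append set_adjacent_moves set_wrap_moves
    by (auto simp: n_def split: if_splits)
  then show "ys \<in> ?R"
  proof cases
    case adjacent
    then show ?thesis by (intro CollectI exI[of _ c]) simp
  next
    case wrap
    then show ?thesis by (intro CollectI exI[of _ "n - 1"]) simp
  qed
next
  fix ys
  assume "ys \<in> ?R"
  then obtain c where c: "c < n" "\<not> xs ! c" "\<not> xs ! ((c + 1) mod n)" "(c + 1) mod n \<noteq> c"
    and ys: "ys = xs[c := True, (c + 1) mod n := True]"
    by blast
  show "ys \<in> set (row_moves xs)"
  proof (cases "Suc c < n")
    case True
    then show ?thesis
      using c ys unfolding row_moves_def set_append set_adjacent_moves n_def by auto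
  next
    case False
    with c have "c = n - 1" "2 \<le> n"
      by (auto simp: mod_Suc split: if_splits)
    then show ?thesis
      using c ys unfolding row_moves_def set_append set_wrap_moves by (simp flip: n_def)
  qed
qed

lemma row_cells_update: "c < length xs \<Longrightarrow> row_cells (xs[c := True]) = insert c (row_cells xs)"
  by (auto simp: row_cells_def nth_list_update)

lemma mem_cells_iff:
  "(r, c) \<in> cells (t, b) \<longleftrightarrow> r = 0 \<and> c < length t \<and> t ! c \<or> r = 1 \<and> c < length b \<and> b ! c"
  by (auto simp: cells_def row_cells_def)

lemma cells_update:
  "c < length t \<Longrightarrow> cells (t[c := True], b) = insert (0, c) (cells (t, b))"
  "c < length b \<Longrightarrow> cells (t, b[c := True]) = insert (1, c) (cells (t, b))"
  by (auto simp: cells_def row_cells_update)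

lemma moves_cells_Vera:
  assumes "length t = n" "length b = n"
  shows "moves n Vera (cells (t, b)) = cells ` set (next_positions Vera (t, b))"
proof -
  have "moves n Vera (cells (t, b)) =
      {cells (t, b) \<union> {(0, c), (1, c)} | c. c < n \<and> \<not> t ! c \<and> \<not> b ! c}"
    using assms by (auto simp: moves_def mem_cells_iff)
  also have "\<dots> = cells ` set (next_positions Vera (t, b))"
    using assms unfolding next_positions.simps set_vertical_moves setcompr_eq_image image_image
    by (auto simp: cells_update intro!: image_cong)
  finally show ?thesis .
qed

lemma moves_cells_Hepzibah:
  assumes "length t = n" "length b = n"
  shows "moves n Hepzibah (cells (t, b)) = cells ` set (next_positions Hepzibah (t, b))"
proof -
  let ?moves_in_row = "\<lambda>r. {cells (t, b) \<union> {(r, c), (r, (c + 1) mod n)} | c. c < n \<and>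
     (r, c) \<notin> cells (t, b) \<and> (r, (c + 1) mod n) \<notin> cells (t, b) \<and> (c + 1) mod n \<noteq> c}"
  have mod_less: "Suc c mod m < m" if "c < m" for c m :: nat
    using that by simp
  have "(\<lambda>t'. cells (t', b)) ` set (row_moves t) = ?moves_in_row 0"
    "(\<lambda>b'. cells (t, b')) ` set (row_moves b) = ?moves_in_row 1"
    using assms unfolding set_row_moves setcompr_eq_image image_image
    by (auto simp: cells_update mem_cells_iff mod_less intro!: image_cong)
  moreover have "moves n Hepzibah (cells (t, b)) = ?moves_in_row 0 \<union> ?moves_in_row 1"
    unfolding moves_def by (auto simp: less_2_cases_iff)
  ultimately show ?thesis
    by (simp add: set_map image_Un image_image)
qed

lemma moves_cells: "has_width n x \<Longrightarrow> moves n p (cells x) = cells ` set (next_positions p x)"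
  by (cases x; cases p) (simp_all add: has_width_def moves_cells_Vera moves_cells_Hepzibah)

lemma has_width_next_positions:
  "has_width n x \<Longrightarrow> x' \<in> set (next_positions p x) \<Longrightarrow> has_width n x'"
  by (cases x; cases p) (auto simp: has_width_def set_vertical_moves set_row_moves)

section \<open>Certificates\<close>

text \<open>\<open>Win i c\<close>: the \<open>i\<close>-th move in the order of \<^const>\<open>next_positions\<close> wins, and \<open>c\<close>
certifies the resulting position as lost for the opponent. \<open>Lose cs\<close>: \<open>cs\<close> lists, in that
order, certificates that the opponent wins after each move.\<close>

datatype cert = Win nat cert | Lose "cert list"

fun certifies_win :: "nat \<Rightarrow> player \<Rightarrow> bool list \<times> bool list \<Rightarrow> cert \<Rightarrow> bool"
  and certifies_loss :: "nat \<Rightarrow> player \<Rightarrow> bool list \<times> bool list \<Rightarrow> cert \<Rightarrow> bool"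
  and certifies_win_list :: "nat \<Rightarrow> player \<Rightarrow> (bool list \<times> bool list) list \<Rightarrow> cert list \<Rightarrow> bool" where
  "certifies_win k p x (Win i c) =
     (0 < k \<and> i < length (next_positions p x) \<and>
      certifies_loss (k - 1) (other p) (next_positions p x ! i) c)"
| "certifies_win k p x (Lose cs) = False"
| "certifies_loss k p x (Lose cs) =
     (k = 0 \<or> certifies_win_list (k - 1) (other p) (next_positions p x) cs)"
| "certifies_loss k p x (Win i c) = (k = 0)"
| "certifies_win_list k p [] [] = True"
| "certifies_win_list k p (x # xs) (c # cs) =
     (certifies_win k p x c \<and> certifies_win_list k p xs cs)"
| "certifies_win_list k p [] (c # cs) = False"
| "certifies_win_list k p (x # xs) [] = False"

lemma certificates_sound:
  "certifies_win k p x c \<longrightarrow> has_width n x \<longrightarrow> wins_fuel n k p (cells x)"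
  "certifies_loss k p x c \<longrightarrow> has_width n x \<longrightarrow> \<not> wins_fuel n k p (cells x)"
  "certifies_win_list k p xs cs \<longrightarrow> (\<forall>x \<in> set xs. has_width n x) \<longrightarrow>
     (\<forall>x \<in> set xs. wins_fuel n k p (cells x))"
proof (induction k p x c and k p x c and k p xs cs
    rule: certifies_win_certifies_loss_certifies_win_list.induct)
  case (1 k p x i c)
  show ?case
  proof (intro impI)
    assume cert: "certifies_win k p x (Win i c)" and width: "has_width n x"
    define x' where "x' = next_positions p x ! i"
    from cert obtain k' where k: "k = Suc k'"
      using not0_implies_Suc by auto
    have x': "x' \<in> set (next_positions p x)"
      using cert by (simp add: x'_def)
    then have "\<not> wins_fuel n k' (other p) (cells x')"
      using 1 cert k width has_width_next_positions by (simp add: x'_def)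
    then show "wins_fuel n k p (cells x)"
      using x' by (auto simp: k moves_cells[OF width])
  qed
next
  case (3 k p x cs)
  show ?case
  proof (intro impI)
    assume cert: "certifies_loss k p x (Lose cs)" and width: "has_width n x"
    show "\<not> wins_fuel n k p (cells x)"
    proof (cases k)
      case (Suc k')
      then have "\<forall>x' \<in> set (next_positions p x). wins_fuel n k' (other p) (cells x')"
        using 3 cert width has_width_next_positions by simp
      then show ?thesis
        by (simp add: Suc moves_cells[OF width])
    qed simp
  qed
qed auto

lemma wins_fuel_if_certifies_win:
  "certifies_win k p (t, b) c \<Longrightarrow> length b = length t \<Longrightarrow> wins_fuel (length t) k p (cells (t, b))"
  using certificates_sound(1) by (simp add: has_width_def)

lemma row_cells_replicate_False: "row_cells (replicate m False) = {}"
  by (simp add: row_cells_def)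

lemma mem_row_cells_Cons:
  "c \<in> row_cells (a # xs) \<longleftrightarrow> c = 0 \<and> a \<or> (\<exists>c'. c = Suc c' \<and> c' \<in> row_cells xs)"
  by (cases c) (auto simp: row_cells_def)

lemma cells_openings:
  "cells (replicate m False, replicate m False) = {}"
  "cells (True # replicate m False, True # replicate m False) = {(0, 0), (1, 0)}"
  "cells (True # True # replicate m False, False # False # replicate m False) = {(0, 0), (0, 1)}"
  by (auto simp: cells_def mem_row_cells_Cons row_cells_replicate_False)

lemma replicate_numeral: "replicate (numeral k) x = x # replicate (pred_numeral k) x"
  by (simp add: numeral_eq_Suc)

section \<open>The boards of width 5, 9 and 13\<close>

lemma Hepzibah_wins_after_Vera_opens_5: "wins_fuel 5 10 Hepzibah {(0, 0), (1, 0)}"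
proof -
  have "certifies_win 10 Hepzibah (True # replicate 4 False, True # replicate 4 False)
    (Win 1 (Lose [Win 1 (Lose []), Win 0 (Lose [])]))"
    by (simp add: row_moves_def wrap_moves_def replicate_numeral)
  from wins_fuel_if_certifies_win[OF this] show ?thesis
    by (simp add: cells_openings)
qed

lemma Vera_wins_after_Hepzibah_opens_5: "wins_fuel 5 10 Vera {(0, 0), (0, 1)}"
proof -
  have "certifies_win 10 Vera (True # True # replicate 3 False, False # False # replicate 3 False)
    (Win 1 (Lose [Win 0 (Lose []), Win 0 (Lose []), Win 0 (Lose [])]))"
    by (simp add: row_moves_def wrap_moves_def replicate_numeral)
  from wins_fuel_if_certifies_win[OF this] show ?thesis
    by (simp add: cells_openings)
qed

lemma Hepzibah_wins_after_Vera_opens_9: "wins_fuel 9 18 Hepzibah {(0, 0), (1, 0)}"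
proof -
  have "certifies_win 18 Hepzibah (True # replicate 8 False, True # replicate 8 False)
    (Win 0 (Lose [Win 0 (Lose [Win 0 (Lose []), Win 2 (Lose [Win 0 (Lose [])]), Win 0 (Lose [])]),
    Win 0 (Lose [Win 0 (Lose []), Win 1 (Lose [Win 0 (Lose [])]), Win 1 (Lose [Win 0 (Lose
    [])])]), Win 1 (Lose [Win 2 (Lose [Win 0 (Lose [])]), Win 1 (Lose [Win 0 (Lose [])]), Win 0
    (Lose [])]), Win 2 (Lose [Win 0 (Lose []), Win 1 (Lose [Win 0 (Lose [])]), Win 0 (Lose [])]),
    Win 2 (Lose [Win 1 (Lose [Win 0 (Lose [])]), Win 1 (Lose [Win 0 (Lose [])]), Win 0 (Lose
    [])]), Win 0 (Lose [Win 0 (Lose []), Win 3 (Lose [Win 0 (Lose [])]), Win 0 (Lose [])])]))"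
    by (simp add: row_moves_def wrap_moves_def replicate_numeral)
  from wins_fuel_if_certifies_win[OF this] show ?thesis
    by (simp add: cells_openings)
qed

lemma Vera_wins_after_Hepzibah_opens_9: "wins_fuel 9 18 Vera {(0, 0), (0, 1)}"
proof -
  have "certifies_win 18 Vera (True # True # replicate 7 False, False # False # replicate 7 False)
    (Win 3 (Lose [Win 2 (Lose [Win 0 (Lose [Win 0 (Lose [])]), Win 0 (Lose [Win 0 (Lose [])]), Win
    2 (Lose [Win 0 (Lose [])]), Win 1 (Lose [Win 0 (Lose []), Win 0 (Lose [])]), Win 0 (Lose [Win
    0 (Lose []), Win 0 (Lose [])])]), Win 2 (Lose [Win 0 (Lose [Win 0 (Lose [])]), Win 1 (Lose
    [Win 0 (Lose [])]), Win 1 (Lose [Win 0 (Lose [])]), Win 0 (Lose [Win 0 (Lose []), Win 0 (Lose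
    [])]), Win 0 (Lose [Win 0 (Lose [])])]), Win 1 (Lose [Win 2 (Lose [Win 0 (Lose [])]), Win 1
    (Lose [Win 0 (Lose [])]), Win 0 (Lose [Win 0 (Lose []), Win 0 (Lose [])]), Win 0 (Lose [Win 0
    (Lose [])]), Win 0 (Lose [Win 0 (Lose [])])]), Win 1 (Lose [Win 2 (Lose [Win 0 (Lose [])]),
    Win 1 (Lose [Win 0 (Lose []), Win 0 (Lose [])]), Win 0 (Lose [Win 0 (Lose []), Win 0 (Lose
    [])]), Win 0 (Lose [Win 0 (Lose [])]), Win 0 (Lose [Win 0 (Lose [])])]), Win 1 (Lose [Win 2
    (Lose [Win 0 (Lose [])]), Win 2 (Lose [Win 0 (Lose [])]), Win 2 (Lose [Win 0 (Lose [])]), Win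
    2 (Lose [Win 0 (Lose [])])]), Win 3 (Lose [Win 0 (Lose [Win 0 (Lose [])]), Win 1 (Lose [Win 0
    (Lose [])]), Win 1 (Lose [Win 0 (Lose []), Win 0 (Lose [])]), Win 0 (Lose [])]), Win 2 (Lose
    [Win 2 (Lose [Win 0 (Lose [])]), Win 1 (Lose [Win 0 (Lose [])]), Win 0 (Lose [Win 0 (Lose
    [])]), Win 0 (Lose [Win 0 (Lose [])])]), Win 2 (Lose [Win 1 (Lose [Win 0 (Lose []), Win 0
    (Lose [])]), Win 0 (Lose [Win 0 (Lose []), Win 0 (Lose [])]), Win 0 (Lose [Win 0 (Lose [])]),
    Win 1 (Lose [Win 0 (Lose []), Win 0 (Lose [])]), Win 0 (Lose [Win 0 (Lose [])])]), Win 1 (Lose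
    [Win 0 (Lose [Win 0 (Lose []), Win 0 (Lose [])]), Win 0 (Lose [Win 0 (Lose []), Win 0 (Lose
    [])]), Win 2 (Lose [Win 0 (Lose [])]), Win 1 (Lose [Win 0 (Lose [])]), Win 0 (Lose [Win 0
    (Lose []), Win 0 (Lose [])])]), Win 1 (Lose [Win 0 (Lose [Win 0 (Lose [])]), Win 0 (Lose [Win
    0 (Lose [])]), Win 2 (Lose [Win 0 (Lose [])]), Win 1 (Lose [Win 0 (Lose [])])]), Win 1 (Lose
    [Win 0 (Lose [Win 0 (Lose [])]), Win 0 (Lose [Win 0 (Lose [])]), Win 2 (Lose []), Win 0 (Lose
    [Win 0 (Lose []), Win 0 (Lose [])])])]))"
    by (simp add: row_moves_def wrap_moves_def replicate_numeral)
  from wins_fuel_if_certifies_win[OF this] show ?thesis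
    by (simp add: cells_openings)
qed

lemma Hepzibah_wins_after_Vera_opens_13: "wins_fuel 13 26 Hepzibah {(0, 0), (1, 0)}"
proof -
  have "certifies_win 26 Hepzibah (True # replicate 12 False, True # replicate 12 False)
    (Win 0 (Lose [Win 0 (Lose [Win 0 (Lose [Win 0 (Lose [Win 0 (Lose [])]), Win 0 (Lose [Win 0
    (Lose [])]), Win 0 (Lose [Win 0 (Lose [])]), Win 0 (Lose [Win 0 (Lose [])])]), Win 0 (Lose
    [Win 0 (Lose [Win 0 (Lose [])]), Win 0 (Lose [Win 0 (Lose [])]), Win 2 (Lose [Win 0 (Lose [Win
    0 (Lose [])]), Win 2 (Lose [])]), Win 0 (Lose [Win 0 (Lose [])])]), Win 0 (Lose [Win 0 (Lose
    [Win 0 (Lose [])]), Win 0 (Lose [Win 0 (Lose [])]), Win 0 (Lose [Win 0 (Lose [])]), Win 0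
    (Lose [Win 0 (Lose [])])]), Win 2 (Lose [Win 0 (Lose [Win 0 (Lose [])]), Win 2 (Lose [Win 2
    (Lose []), Win 0 (Lose [Win 0 (Lose [])])]), Win 0 (Lose [Win 0 (Lose [])]), Win 0 (Lose [Win
    0 (Lose [])])]), Win 0 (Lose [Win 0 (Lose [Win 0 (Lose [])]), Win 0 (Lose [Win 0 (Lose [])]),
    Win 0 (Lose [Win 0 (Lose [])]), Win 0 (Lose [Win 0 (Lose [])])]), Win 3 (Lose [Win 0 (Lose
    [Win 0 (Lose [])]), Win 2 (Lose [Win 0 (Lose [Win 0 (Lose [])]), Win 1 (Lose [])]), Win 0
    (Lose [Win 0 (Lose [])]), Win 0 (Lose [Win 0 (Lose [])])]), Win 0 (Lose [Win 0 (Lose [Win 0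
    (Lose [])]), Win 0 (Lose [Win 0 (Lose [])]), Win 0 (Lose [Win 0 (Lose [])]), Win 0 (Lose [Win
    0 (Lose [])])])]), Win 0 (Lose [Win 0 (Lose [Win 0 (Lose [Win 0 (Lose [])]), Win 0 (Lose [Win
    0 (Lose [])]), Win 0 (Lose [Win 0 (Lose [])]), Win 0 (Lose [Win 0 (Lose [])])]), Win 0 (Lose
    [Win 0 (Lose [Win 0 (Lose [])]), Win 0 (Lose [Win 0 (Lose [])]), Win 1 (Lose [Win 0 (Lose [Win
    0 (Lose [])]), Win 2 (Lose [])]), Win 0 (Lose [Win 0 (Lose [])])]), Win 0 (Lose [Win 0 (Lose
    [Win 0 (Lose [])]), Win 0 (Lose [Win 0 (Lose [])]), Win 1 (Lose [Win 0 (Lose [Win 0 (Lose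
    [])]), Win 1 (Lose [])]), Win 1 (Lose [Win 2 (Lose []), Win 1 (Lose [])])]), Win 0 (Lose [Win
    0 (Lose [Win 0 (Lose [])]), Win 0 (Lose [Win 0 (Lose [])]), Win 1 (Lose [Win 0 (Lose [Win 0
    (Lose [])]), Win 0 (Lose [Win 0 (Lose [])])]), Win 0 (Lose [Win 0 (Lose [])])]), Win 2 (Lose
    [Win 0 (Lose [Win 0 (Lose [])]), Win 0 (Lose [Win 0 (Lose [])]), Win 1 (Lose [Win 0 (Lose [Win
    0 (Lose [])]), Win 1 (Lose [])]), Win 0 (Lose [Win 0 (Lose [])])]), Win 2 (Lose [Win 0 (Lose
    [Win 0 (Lose [])]), Win 1 (Lose [Win 0 (Lose [Win 0 (Lose [])]), Win 1 (Lose [])]), Win 1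
    (Lose [Win 0 (Lose [Win 0 (Lose [])]), Win 1 (Lose [])]), Win 0 (Lose [Win 0 (Lose [])])]),
    Win 3 (Lose [Win 0 (Lose [Win 0 (Lose [])]), Win 0 (Lose [Win 0 (Lose [])]), Win 1 (Lose [Win
    1 (Lose []), Win 1 (Lose [])]), Win 0 (Lose [Win 0 (Lose [])])])]), Win 0 (Lose [Win 0 (Lose
    [Win 0 (Lose [Win 0 (Lose [])]), Win 0 (Lose [Win 0 (Lose [])]), Win 0 (Lose [Win 0 (Lose
    [])]), Win 0 (Lose [Win 0 (Lose [])])]), Win 0 (Lose [Win 0 (Lose [Win 0 (Lose [])]), Win 0
    (Lose [Win 0 (Lose [])]), Win 4 (Lose [Win 0 (Lose [Win 0 (Lose [])]), Win 0 (Lose [Win 0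
    (Lose [])])]), Win 0 (Lose [Win 0 (Lose [])])]), Win 0 (Lose [Win 0 (Lose [Win 0 (Lose [])]),
    Win 0 (Lose [Win 0 (Lose [])]), Win 0 (Lose [Win 0 (Lose [])]), Win 0 (Lose [Win 0 (Lose
    [])])]), Win 0 (Lose [Win 0 (Lose [Win 0 (Lose [])]), Win 0 (Lose [Win 0 (Lose [])]), Win 4
    (Lose [Win 0 (Lose [Win 0 (Lose [])]), Win 0 (Lose [Win 0 (Lose [])])]), Win 0 (Lose [Win 0
    (Lose [])])]), Win 0 (Lose [Win 0 (Lose [Win 0 (Lose [])]), Win 0 (Lose [Win 0 (Lose [])]),
    Win 0 (Lose [Win 0 (Lose [])]), Win 0 (Lose [Win 0 (Lose [])])]), Win 0 (Lose [Win 0 (Lose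
    [Win 0 (Lose [])]), Win 4 (Lose [Win 0 (Lose [Win 0 (Lose [])]), Win 0 (Lose [Win 0 (Lose
    [])])]), Win 0 (Lose [Win 0 (Lose [])]), Win 0 (Lose [Win 0 (Lose [])])]), Win 0 (Lose [Win 0
    (Lose [Win 0 (Lose [])]), Win 0 (Lose [Win 0 (Lose [])]), Win 0 (Lose [Win 0 (Lose [])]), Win
    0 (Lose [Win 0 (Lose [])])])]), Win 2 (Lose [Win 0 (Lose [Win 0 (Lose [Win 0 (Lose [])]), Win
    0 (Lose [Win 0 (Lose [])]), Win 0 (Lose [Win 0 (Lose [])]), Win 0 (Lose [Win 0 (Lose [])])]),
    Win 2 (Lose [Win 0 (Lose [Win 0 (Lose [])]), Win 0 (Lose [Win 0 (Lose [])]), Win 1 (Lose [Win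
    1 (Lose []), Win 0 (Lose [Win 0 (Lose [])])]), Win 1 (Lose [Win 1 (Lose []), Win 0 (Lose [Win
    0 (Lose [])])])]), Win 0 (Lose [Win 0 (Lose [Win 0 (Lose [])]), Win 0 (Lose [Win 0 (Lose
    [])]), Win 0 (Lose [Win 0 (Lose [])]), Win 0 (Lose [Win 0 (Lose [])])]), Win 2 (Lose [Win 0
    (Lose [Win 0 (Lose [])]), Win 1 (Lose [Win 2 (Lose []), Win 0 (Lose [Win 0 (Lose [])])]), Win
    0 (Lose [Win 0 (Lose [])]), Win 0 (Lose [Win 0 (Lose [])])]), Win 2 (Lose [Win 0 (Lose [Win 0
    (Lose [])]), Win 1 (Lose [Win 1 (Lose []), Win 0 (Lose [Win 0 (Lose [])])]), Win 0 (Lose [Win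
    0 (Lose [])]), Win 0 (Lose [Win 0 (Lose [])])]), Win 2 (Lose [Win 0 (Lose [Win 0 (Lose [])]),
    Win 1 (Lose [Win 0 (Lose [Win 0 (Lose [])]), Win 0 (Lose [Win 0 (Lose [])])]), Win 0 (Lose
    [Win 0 (Lose [])]), Win 0 (Lose [Win 0 (Lose [])])]), Win 0 (Lose [Win 0 (Lose [Win 0 (Lose
    [])]), Win 0 (Lose [Win 0 (Lose [])]), Win 3 (Lose [Win 0 (Lose [Win 0 (Lose [])]), Win 3
    (Lose [])]), Win 0 (Lose [Win 0 (Lose [])])])]), Win 2 (Lose [Win 0 (Lose [Win 0 (Lose [Win 0
    (Lose [])]), Win 0 (Lose [Win 0 (Lose [])]), Win 1 (Lose [Win 0 (Lose [Win 0 (Lose [])]), Win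
    2 (Lose [])]), Win 0 (Lose [Win 0 (Lose [])])]), Win 0 (Lose [Win 0 (Lose [Win 0 (Lose [])]),
    Win 0 (Lose [Win 0 (Lose [])]), Win 1 (Lose [Win 0 (Lose [Win 0 (Lose [])]), Win 2 (Lose
    [])]), Win 0 (Lose [Win 0 (Lose [])])]), Win 0 (Lose [Win 0 (Lose [Win 0 (Lose [])]), Win 0
    (Lose [Win 0 (Lose [])]), Win 0 (Lose [Win 0 (Lose [])]), Win 0 (Lose [Win 0 (Lose [])])]),
    Win 1 (Lose [Win 1 (Lose [Win 2 (Lose []), Win 0 (Lose [Win 0 (Lose [])])]), Win 1 (Lose [Win
    2 (Lose []), Win 0 (Lose [Win 0 (Lose [])])]), Win 0 (Lose [Win 0 (Lose [])]), Win 0 (Lose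
    [Win 0 (Lose [])])]), Win 0 (Lose [Win 0 (Lose [Win 0 (Lose [])]), Win 0 (Lose [Win 0 (Lose
    [])]), Win 0 (Lose [Win 0 (Lose [])]), Win 0 (Lose [Win 0 (Lose [])])]), Win 1 (Lose [Win 1
    (Lose [Win 0 (Lose [Win 0 (Lose [])]), Win 2 (Lose [])]), Win 1 (Lose [Win 0 (Lose [Win 0
    (Lose [])]), Win 2 (Lose [])]), Win 0 (Lose [Win 0 (Lose [])]), Win 0 (Lose [Win 0 (Lose
    [])])]), Win 0 (Lose [Win 0 (Lose [Win 0 (Lose [])]), Win 0 (Lose [Win 0 (Lose [])]), Win 0
    (Lose [Win 0 (Lose [])]), Win 0 (Lose [Win 0 (Lose [])])])]), Win 3 (Lose [Win 0 (Lose [Win 0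
    (Lose [Win 0 (Lose [])]), Win 0 (Lose [Win 0 (Lose [])]), Win 0 (Lose [Win 0 (Lose [])]), Win
    0 (Lose [Win 0 (Lose [])])]), Win 0 (Lose [Win 0 (Lose [Win 0 (Lose [])]), Win 0 (Lose [Win 0
    (Lose [])]), Win 1 (Lose [Win 0 (Lose [Win 0 (Lose [])]), Win 0 (Lose [])]), Win 1 (Lose [Win
    2 (Lose []), Win 0 (Lose [])])]), Win 0 (Lose [Win 0 (Lose [Win 0 (Lose [])]), Win 0 (Lose
    [Win 0 (Lose [])]), Win 0 (Lose [Win 0 (Lose [])]), Win 0 (Lose [Win 0 (Lose [])])]), Win 2
    (Lose [Win 0 (Lose [Win 0 (Lose [])]), Win 1 (Lose [Win 2 (Lose []), Win 0 (Lose [])]), Win 0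
    (Lose [Win 0 (Lose [])]), Win 0 (Lose [Win 0 (Lose [])])]), Win 2 (Lose [Win 0 (Lose [Win 0
    (Lose [])]), Win 1 (Lose [Win 0 (Lose [Win 0 (Lose [])]), Win 0 (Lose [])]), Win 0 (Lose [Win
    0 (Lose [])]), Win 0 (Lose [Win 0 (Lose [])])]), Win 2 (Lose [Win 0 (Lose [Win 0 (Lose [])]),
    Win 1 (Lose [Win 0 (Lose [Win 0 (Lose [])]), Win 0 (Lose [])]), Win 0 (Lose [Win 0 (Lose
    [])]), Win 0 (Lose [Win 0 (Lose [])])]), Win 2 (Lose [Win 0 (Lose [Win 0 (Lose [])]), Win 1
    (Lose [Win 2 (Lose []), Win 0 (Lose [])]), Win 0 (Lose [Win 0 (Lose [])]), Win 0 (Lose [Win 0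
    (Lose [])])])]), Win 5 (Lose [Win 0 (Lose [Win 0 (Lose [Win 0 (Lose [])]), Win 2 (Lose [Win 2
    (Lose []), Win 0 (Lose [Win 0 (Lose [])])]), Win 0 (Lose [Win 0 (Lose [])]), Win 0 (Lose [Win
    0 (Lose [])])]), Win 0 (Lose [Win 0 (Lose [Win 0 (Lose [])]), Win 1 (Lose [Win 2 (Lose []),
    Win 0 (Lose [Win 0 (Lose [])])]), Win 1 (Lose [Win 2 (Lose []), Win 1 (Lose [])]), Win 0 (Lose
    [Win 0 (Lose [])])]), Win 0 (Lose [Win 0 (Lose [Win 0 (Lose [])]), Win 4 (Lose [Win 0 (Lose
    [Win 0 (Lose [])]), Win 0 (Lose [Win 0 (Lose [])])]), Win 0 (Lose [Win 0 (Lose [])]), Win 0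
    (Lose [Win 0 (Lose [])])]), Win 2 (Lose [Win 0 (Lose [Win 0 (Lose [])]), Win 1 (Lose [Win 2
    (Lose []), Win 0 (Lose [Win 0 (Lose [])])]), Win 0 (Lose [Win 0 (Lose [])]), Win 0 (Lose [Win
    0 (Lose [])])]), Win 2 (Lose [Win 1 (Lose [Win 2 (Lose []), Win 0 (Lose [Win 0 (Lose [])])]),
    Win 1 (Lose [Win 2 (Lose []), Win 0 (Lose [Win 0 (Lose [])])]), Win 0 (Lose [Win 0 (Lose
    [])]), Win 0 (Lose [Win 0 (Lose [])])]), Win 3 (Lose [Win 0 (Lose [Win 0 (Lose [])]), Win 1
    (Lose [Win 2 (Lose []), Win 0 (Lose [])]), Win 0 (Lose [Win 0 (Lose [])]), Win 0 (Lose [Win 0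
    (Lose [])])]), Win 0 (Lose [Win 0 (Lose [Win 0 (Lose [])]), Win 0 (Lose [Win 0 (Lose [])]),
    Win 0 (Lose [Win 0 (Lose [])]), Win 0 (Lose [Win 0 (Lose [])])])]), Win 6 (Lose [Win 0 (Lose
    [Win 0 (Lose [Win 0 (Lose [])]), Win 0 (Lose [Win 0 (Lose [])]), Win 0 (Lose [Win 0 (Lose
    [])]), Win 0 (Lose [Win 0 (Lose [])])]), Win 0 (Lose [Win 0 (Lose [Win 0 (Lose [])]), Win 0
    (Lose [Win 0 (Lose [])]), Win 1 (Lose [Win 0 (Lose [Win 0 (Lose [])]), Win 1 (Lose [])]), Win
    0 (Lose [Win 0 (Lose [])])]), Win 0 (Lose [Win 0 (Lose [Win 0 (Lose [])]), Win 0 (Lose [Win 0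
    (Lose [])]), Win 0 (Lose [Win 0 (Lose [])]), Win 0 (Lose [Win 0 (Lose [])])]), Win 2 (Lose
    [Win 0 (Lose [Win 0 (Lose [])]), Win 1 (Lose [Win 1 (Lose []), Win 0 (Lose [Win 0 (Lose
    [])])]), Win 0 (Lose [Win 0 (Lose [])]), Win 0 (Lose [Win 0 (Lose [])])]), Win 0 (Lose [Win 0
    (Lose [Win 0 (Lose [])]), Win 0 (Lose [Win 0 (Lose [])]), Win 0 (Lose [Win 0 (Lose [])]), Win
    0 (Lose [Win 0 (Lose [])])]), Win 3 (Lose [Win 0 (Lose [Win 0 (Lose [])]), Win 1 (Lose [Win 0
    (Lose [Win 0 (Lose [])]), Win 0 (Lose [])]), Win 0 (Lose [Win 0 (Lose [])]), Win 0 (Lose [Win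
    0 (Lose [])])]), Win 0 (Lose [Win 0 (Lose [Win 0 (Lose [])]), Win 0 (Lose [Win 0 (Lose [])]),
    Win 0 (Lose [Win 0 (Lose [])]), Win 0 (Lose [Win 0 (Lose [])])])]), Win 6 (Lose [Win 0 (Lose
    [Win 0 (Lose [Win 0 (Lose [])]), Win 2 (Lose [Win 0 (Lose [Win 0 (Lose [])]), Win 1 (Lose
    [])]), Win 0 (Lose [Win 0 (Lose [])]), Win 0 (Lose [Win 0 (Lose [])])]), Win 0 (Lose [Win 0
    (Lose [Win 0 (Lose [])]), Win 1 (Lose [Win 0 (Lose [Win 0 (Lose [])]), Win 1 (Lose [])]), Win
    1 (Lose [Win 0 (Lose [Win 0 (Lose [])]), Win 1 (Lose [])]), Win 0 (Lose [Win 0 (Lose [])])]),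
    Win 0 (Lose [Win 0 (Lose [Win 0 (Lose [])]), Win 3 (Lose [Win 0 (Lose [Win 0 (Lose [])]), Win
    0 (Lose [Win 0 (Lose [])])]), Win 0 (Lose [Win 0 (Lose [])]), Win 0 (Lose [Win 0 (Lose
    [])])]), Win 2 (Lose [Win 0 (Lose [Win 0 (Lose [])]), Win 1 (Lose [Win 0 (Lose [Win 0 (Lose
    [])]), Win 0 (Lose [Win 0 (Lose [])])]), Win 0 (Lose [Win 0 (Lose [])]), Win 0 (Lose [Win 0
    (Lose [])])]), Win 2 (Lose [Win 1 (Lose [Win 0 (Lose [Win 0 (Lose [])]), Win 1 (Lose [])]),
    Win 1 (Lose [Win 0 (Lose [Win 0 (Lose [])]), Win 1 (Lose [])]), Win 0 (Lose [Win 0 (Lose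
    [])]), Win 0 (Lose [Win 0 (Lose [])])]), Win 3 (Lose [Win 0 (Lose [Win 0 (Lose [])]), Win 1
    (Lose [Win 0 (Lose [Win 0 (Lose [])]), Win 0 (Lose [])]), Win 0 (Lose [Win 0 (Lose [])]), Win
    0 (Lose [Win 0 (Lose [])])]), Win 0 (Lose [Win 0 (Lose [Win 0 (Lose [])]), Win 0 (Lose [Win 0
    (Lose [])]), Win 0 (Lose [Win 0 (Lose [])]), Win 0 (Lose [Win 0 (Lose [])])])]), Win 7 (Lose
    [Win 0 (Lose [Win 0 (Lose [Win 0 (Lose [])]), Win 0 (Lose [Win 0 (Lose [])]), Win 0 (Lose [Win
    0 (Lose [])]), Win 0 (Lose [Win 0 (Lose [])])]), Win 0 (Lose [Win 0 (Lose [Win 0 (Lose [])]),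
    Win 0 (Lose [Win 0 (Lose [])]), Win 1 (Lose [Win 1 (Lose []), Win 1 (Lose [])]), Win 0 (Lose
    [Win 0 (Lose [])])]), Win 0 (Lose [Win 0 (Lose [Win 0 (Lose [])]), Win 0 (Lose [Win 0 (Lose
    [])]), Win 0 (Lose [Win 0 (Lose [])]), Win 0 (Lose [Win 0 (Lose [])])]), Win 0 (Lose [Win 0
    (Lose [Win 0 (Lose [])]), Win 0 (Lose [Win 0 (Lose [])]), Win 3 (Lose [Win 2 (Lose []), Win 0
    (Lose [Win 0 (Lose [])])]), Win 0 (Lose [Win 0 (Lose [])])]), Win 0 (Lose [Win 0 (Lose [Win 0
    (Lose [])]), Win 0 (Lose [Win 0 (Lose [])]), Win 0 (Lose [Win 0 (Lose [])]), Win 0 (Lose [Win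
    0 (Lose [])])]), Win 3 (Lose [Win 0 (Lose [Win 0 (Lose [])]), Win 1 (Lose [Win 1 (Lose []),
    Win 0 (Lose [])]), Win 0 (Lose [Win 0 (Lose [])]), Win 0 (Lose [Win 0 (Lose [])])]), Win 0
    (Lose [Win 0 (Lose [Win 0 (Lose [])]), Win 0 (Lose [Win 0 (Lose [])]), Win 0 (Lose [Win 0
    (Lose [])]), Win 0 (Lose [Win 0 (Lose [])])])])]))"
    by (simp add: row_moves_def wrap_moves_def replicate_numeral)
  from wins_fuel_if_certifies_win[OF this] show ?thesis
    by (simp add: cells_openings)
qed

lemma Hepzibah_first_wins_13: "wins_fuel 13 27 Hepzibah {}"
proof -
  have "certifies_win 27 Hepzibah (replicate 13 False, replicate 13 False)
    (Win 0 (Lose [Win 0 (Lose [Win 1 (Lose [Win 0 (Lose [Win 5 (Lose []), Win 5 (Lose [])]), Win 0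
    (Lose [Win 4 (Lose []), Win 2 (Lose [])]), Win 0 (Lose [Win 3 (Lose []), Win 2 (Lose [])]),
    Win 0 (Lose [Win 5 (Lose []), Win 2 (Lose [])]), Win 0 (Lose [Win 5 (Lose []), Win 2 (Lose
    [])])]), Win 0 (Lose [Win 0 (Lose [Win 5 (Lose []), Win 5 (Lose [])]), Win 0 (Lose [Win 4
    (Lose []), Win 2 (Lose [])]), Win 0 (Lose [Win 3 (Lose []), Win 2 (Lose [])]), Win 0 (Lose
    [Win 5 (Lose []), Win 2 (Lose [])]), Win 0 (Lose [Win 5 (Lose []), Win 2 (Lose [])])]), Win 2
    (Lose [Win 0 (Lose [Win 2 (Lose []), Win 0 (Lose [Win 0 (Lose [])])]), Win 0 (Lose [Win 2
    (Lose []), Win 2 (Lose [])]), Win 0 (Lose [Win 5 (Lose []), Win 5 (Lose [])]), Win 0 (Lose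
    [Win 5 (Lose []), Win 4 (Lose [])]), Win 0 (Lose [Win 5 (Lose []), Win 4 (Lose [])])]), Win 0
    (Lose [Win 0 (Lose [Win 5 (Lose []), Win 5 (Lose [])]), Win 0 (Lose [Win 5 (Lose []), Win 4
    (Lose [])]), Win 0 (Lose [Win 0 (Lose [Win 0 (Lose [])]), Win 4 (Lose [])]), Win 0 (Lose [Win
    5 (Lose []), Win 4 (Lose [])]), Win 0 (Lose [Win 5 (Lose []), Win 4 (Lose [])])]), Win 2 (Lose
    [Win 0 (Lose [Win 4 (Lose []), Win 2 (Lose [])]), Win 0 (Lose [Win 4 (Lose []), Win 2 (Lose
    [])]), Win 1 (Lose [Win 2 (Lose []), Win 2 (Lose [])]), Win 0 (Lose [Win 6 (Lose []), Win 0
    (Lose [Win 0 (Lose [])])]), Win 1 (Lose [Win 2 (Lose []), Win 2 (Lose [])])]), Win 2 (Lose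
    [Win 0 (Lose [Win 3 (Lose []), Win 2 (Lose [])]), Win 0 (Lose [Win 3 (Lose []), Win 2 (Lose
    [])]), Win 1 (Lose [Win 2 (Lose []), Win 2 (Lose [])]), Win 0 (Lose [Win 6 (Lose []), Win 6
    (Lose [])]), Win 0 (Lose [Win 0 (Lose [Win 0 (Lose [])]), Win 6 (Lose [])])]), Win 4 (Lose
    [Win 0 (Lose [Win 4 (Lose []), Win 3 (Lose [])]), Win 0 (Lose [Win 5 (Lose []), Win 2 (Lose
    [])]), Win 0 (Lose [Win 5 (Lose []), Win 4 (Lose [])]), Win 0 (Lose [Win 5 (Lose []), Win 4
    (Lose [])]), Win 0 (Lose [Win 4 (Lose []), Win 4 (Lose [])])]), Win 4 (Lose [Win 0 (Lose [Win
    4 (Lose []), Win 3 (Lose [])]), Win 0 (Lose [Win 5 (Lose []), Win 2 (Lose [])]), Win 0 (Lose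
    [Win 5 (Lose []), Win 4 (Lose [])]), Win 0 (Lose [Win 5 (Lose []), Win 4 (Lose [])]), Win 0
    (Lose [Win 4 (Lose []), Win 4 (Lose [])])])]), Win 0 (Lose [Win 1 (Lose [Win 0 (Lose [Win 5
    (Lose []), Win 5 (Lose [])]), Win 0 (Lose [Win 4 (Lose []), Win 2 (Lose [])]), Win 0 (Lose
    [Win 3 (Lose []), Win 2 (Lose [])]), Win 0 (Lose [Win 5 (Lose []), Win 2 (Lose [])]), Win 0
    (Lose [Win 5 (Lose []), Win 2 (Lose [])])]), Win 0 (Lose [Win 0 (Lose [Win 5 (Lose []), Win 5
    (Lose [])]), Win 0 (Lose [Win 4 (Lose []), Win 1 (Lose [])]), Win 0 (Lose [Win 3 (Lose []),
    Win 1 (Lose [])]), Win 0 (Lose [Win 5 (Lose []), Win 1 (Lose [])]), Win 0 (Lose [Win 5 (Lose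
    []), Win 1 (Lose [])])]), Win 0 (Lose [Win 0 (Lose [Win 5 (Lose []), Win 2 (Lose [])]), Win 0
    (Lose [Win 5 (Lose []), Win 1 (Lose [])]), Win 0 (Lose [Win 2 (Lose []), Win 1 (Lose [])]),
    Win 1 (Lose [Win 2 (Lose [Win 0 (Lose [])]), Win 1 (Lose [Win 0 (Lose [])]), Win 1 (Lose [Win
    0 (Lose [])])]), Win 0 (Lose [Win 2 (Lose []), Win 1 (Lose [])])]), Win 0 (Lose [Win 0 (Lose
    [Win 5 (Lose []), Win 5 (Lose [])]), Win 0 (Lose [Win 5 (Lose []), Win 1 (Lose [])]), Win 0
    (Lose [Win 0 (Lose [Win 0 (Lose [])]), Win 1 (Lose [])]), Win 0 (Lose [Win 5 (Lose []), Win 1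
    (Lose [])]), Win 0 (Lose [Win 5 (Lose []), Win 1 (Lose [])])]), Win 0 (Lose [Win 0 (Lose [Win
    5 (Lose []), Win 4 (Lose [])]), Win 0 (Lose [Win 5 (Lose []), Win 1 (Lose [])]), Win 0 (Lose
    [Win 4 (Lose []), Win 1 (Lose [])]), Win 1 (Lose [Win 3 (Lose [Win 0 (Lose [])]), Win 3 (Lose
    [Win 0 (Lose [])]), Win 3 (Lose [Win 0 (Lose [])])]), Win 0 (Lose [Win 4 (Lose []), Win 1
    (Lose [])])]), Win 2 (Lose [Win 1 (Lose [Win 2 (Lose []), Win 2 (Lose [])]), Win 0 (Lose [Win
    2 (Lose []), Win 1 (Lose [])]), Win 0 (Lose [Win 2 (Lose []), Win 1 (Lose [])]), Win 0 (Lose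
    [Win 6 (Lose []), Win 1 (Lose [])]), Win 0 (Lose [Win 0 (Lose [Win 0 (Lose [])]), Win 1 (Lose
    [])])]), Win 0 (Lose [Win 0 (Lose [Win 6 (Lose []), Win 6 (Lose [])]), Win 0 (Lose [Win 5
    (Lose []), Win 1 (Lose [])]), Win 1 (Lose [Win 3 (Lose [Win 0 (Lose [])]), Win 3 (Lose [Win 0
    (Lose [])]), Win 3 (Lose [Win 0 (Lose [])])]), Win 0 (Lose [Win 6 (Lose []), Win 1 (Lose
    [])]), Win 0 (Lose [Win 6 (Lose []), Win 1 (Lose [])])]), Win 4 (Lose [Win 0 (Lose [Win 4
    (Lose []), Win 4 (Lose [])]), Win 0 (Lose [Win 3 (Lose []), Win 1 (Lose [])]), Win 0 (Lose
    [Win 2 (Lose []), Win 1 (Lose [])]), Win 0 (Lose [Win 4 (Lose []), Win 1 (Lose [])]), Win 0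
    (Lose [Win 4 (Lose []), Win 1 (Lose [])])])]), Win 0 (Lose [Win 1 (Lose [Win 0 (Lose [Win 6
    (Lose []), Win 6 (Lose [])]), Win 0 (Lose [Win 5 (Lose []), Win 3 (Lose [])]), Win 0 (Lose
    [Win 4 (Lose []), Win 3 (Lose [])]), Win 0 (Lose [Win 6 (Lose []), Win 3 (Lose [])]), Win 0
    (Lose [Win 6 (Lose []), Win 3 (Lose [])])]), Win 0 (Lose [Win 0 (Lose [Win 6 (Lose []), Win 6
    (Lose [])]), Win 0 (Lose [Win 5 (Lose []), Win 0 (Lose [Win 0 (Lose [])])]), Win 0 (Lose [Win
    4 (Lose []), Win 0 (Lose [Win 0 (Lose [])])]), Win 0 (Lose [Win 6 (Lose []), Win 0 (Lose [Win
    0 (Lose [])])]), Win 0 (Lose [Win 6 (Lose []), Win 0 (Lose [Win 0 (Lose [])])])]), Win 0 (Lose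
    [Win 0 (Lose [Win 5 (Lose []), Win 5 (Lose [])]), Win 0 (Lose [Win 5 (Lose []), Win 0 (Lose
    [Win 0 (Lose [])])]), Win 0 (Lose [Win 5 (Lose []), Win 0 (Lose [Win 0 (Lose [])])]), Win 0
    (Lose [Win 5 (Lose []), Win 5 (Lose [])]), Win 1 (Lose [Win 5 (Lose []), Win 4 (Lose [])])]),
    Win 0 (Lose [Win 0 (Lose [Win 5 (Lose []), Win 5 (Lose [])]), Win 0 (Lose [Win 5 (Lose []),
    Win 4 (Lose [])]), Win 0 (Lose [Win 0 (Lose [Win 0 (Lose [])]), Win 4 (Lose [])]), Win 0 (Lose
    [Win 5 (Lose []), Win 4 (Lose [])]), Win 0 (Lose [Win 5 (Lose []), Win 4 (Lose [])])]), Win 3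
    (Lose [Win 0 (Lose [Win 5 (Lose []), Win 4 (Lose [])]), Win 0 (Lose [Win 5 (Lose []), Win 0
    (Lose [Win 0 (Lose [])])]), Win 0 (Lose [Win 5 (Lose []), Win 0 (Lose [Win 0 (Lose [])])]),
    Win 0 (Lose [Win 5 (Lose []), Win 4 (Lose [])]), Win 1 (Lose [Win 4 (Lose []), Win 3 (Lose
    [])])]), Win 1 (Lose [Win 0 (Lose [Win 6 (Lose []), Win 0 (Lose [Win 0 (Lose [])])]), Win 0
    (Lose [Win 0 (Lose [Win 0 (Lose [])]), Win 3 (Lose [])]), Win 0 (Lose [Win 4 (Lose []), Win 3
    (Lose [])]), Win 0 (Lose [Win 6 (Lose []), Win 3 (Lose [])]), Win 0 (Lose [Win 0 (Lose [Win 0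
    (Lose [])]), Win 3 (Lose [])])]), Win 0 (Lose [Win 0 (Lose [Win 5 (Lose []), Win 5 (Lose
    [])]), Win 0 (Lose [Win 5 (Lose []), Win 4 (Lose [])]), Win 0 (Lose [Win 6 (Lose []), Win 0
    (Lose [Win 0 (Lose [])])]), Win 0 (Lose [Win 6 (Lose []), Win 6 (Lose [])]), Win 1 (Lose [Win
    5 (Lose []), Win 4 (Lose [])])]), Win 1 (Lose [Win 1 (Lose [Win 5 (Lose []), Win 4 (Lose
    [])]), Win 0 (Lose [Win 5 (Lose []), Win 3 (Lose [])]), Win 0 (Lose [Win 4 (Lose []), Win 3
    (Lose [])]), Win 0 (Lose [Win 0 (Lose [Win 0 (Lose [])]), Win 3 (Lose [])]), Win 0 (Lose [Win
    6 (Lose []), Win 3 (Lose [])])])]), Win 0 (Lose [Win 1 (Lose [Win 0 (Lose [Win 6 (Lose []),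
    Win 6 (Lose [])]), Win 0 (Lose [Win 5 (Lose []), Win 3 (Lose [])]), Win 0 (Lose [Win 4 (Lose
    []), Win 3 (Lose [])]), Win 0 (Lose [Win 6 (Lose []), Win 3 (Lose [])]), Win 0 (Lose [Win 6
    (Lose []), Win 3 (Lose [])])]), Win 0 (Lose [Win 0 (Lose [Win 6 (Lose []), Win 6 (Lose [])]),
    Win 0 (Lose [Win 5 (Lose []), Win 3 (Lose [])]), Win 0 (Lose [Win 4 (Lose []), Win 3 (Lose
    [])]), Win 0 (Lose [Win 6 (Lose []), Win 3 (Lose [])]), Win 0 (Lose [Win 6 (Lose []), Win 3
    (Lose [])])]), Win 0 (Lose [Win 0 (Lose [Win 6 (Lose []), Win 0 (Lose [Win 0 (Lose [])])]),
    Win 0 (Lose [Win 6 (Lose []), Win 3 (Lose [])]), Win 0 (Lose [Win 0 (Lose [Win 0 (Lose [])]),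
    Win 3 (Lose [])]), Win 3 (Lose [Win 3 (Lose [Win 0 (Lose [])]), Win 3 (Lose [Win 0 (Lose
    [])]), Win 3 (Lose [Win 0 (Lose [])])]), Win 0 (Lose [Win 0 (Lose [Win 0 (Lose [])]), Win 3
    (Lose [])])]), Win 0 (Lose [Win 0 (Lose [Win 5 (Lose []), Win 5 (Lose [])]), Win 0 (Lose [Win
    5 (Lose []), Win 3 (Lose [])]), Win 0 (Lose [Win 0 (Lose [Win 0 (Lose [])]), Win 3 (Lose
    [])]), Win 0 (Lose [Win 5 (Lose []), Win 3 (Lose [])]), Win 0 (Lose [Win 5 (Lose []), Win 3
    (Lose [])])]), Win 0 (Lose [Win 0 (Lose [Win 5 (Lose []), Win 4 (Lose [])]), Win 0 (Lose [Win
    5 (Lose []), Win 3 (Lose [])]), Win 0 (Lose [Win 4 (Lose []), Win 3 (Lose [])]), Win 3 (Lose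
    [Win 3 (Lose [Win 0 (Lose [])]), Win 3 (Lose [Win 0 (Lose [])]), Win 3 (Lose [Win 0 (Lose
    [])])]), Win 0 (Lose [Win 4 (Lose []), Win 3 (Lose [])])]), Win 3 (Lose [Win 1 (Lose [Win 4
    (Lose []), Win 3 (Lose [])]), Win 0 (Lose [Win 4 (Lose []), Win 3 (Lose [])]), Win 0 (Lose
    [Win 0 (Lose [Win 0 (Lose [])]), Win 3 (Lose [])]), Win 0 (Lose [Win 0 (Lose [Win 0 (Lose
    [])]), Win 3 (Lose [])]), Win 0 (Lose [Win 4 (Lose []), Win 3 (Lose [])])]), Win 0 (Lose [Win
    0 (Lose [Win 6 (Lose []), Win 6 (Lose [])]), Win 0 (Lose [Win 5 (Lose []), Win 3 (Lose [])]),
    Win 3 (Lose [Win 3 (Lose [Win 0 (Lose [])]), Win 3 (Lose [Win 0 (Lose [])]), Win 3 (Lose [Win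
    0 (Lose [])])]), Win 0 (Lose [Win 6 (Lose []), Win 3 (Lose [])]), Win 0 (Lose [Win 6 (Lose
    []), Win 3 (Lose [])])]), Win 0 (Lose [Win 1 (Lose [Win 5 (Lose []), Win 4 (Lose [])]), Win 0
    (Lose [Win 5 (Lose []), Win 3 (Lose [])]), Win 0 (Lose [Win 4 (Lose []), Win 3 (Lose [])]),
    Win 0 (Lose [Win 0 (Lose [Win 0 (Lose [])]), Win 3 (Lose [])]), Win 0 (Lose [Win 6 (Lose []),
    Win 3 (Lose [])])])]), Win 2 (Lose [Win 0 (Lose [Win 0 (Lose [Win 5 (Lose []), Win 5 (Lose
    [])]), Win 0 (Lose [Win 4 (Lose []), Win 1 (Lose [])]), Win 0 (Lose [Win 3 (Lose []), Win 1
    (Lose [])]), Win 0 (Lose [Win 5 (Lose []), Win 1 (Lose [])]), Win 0 (Lose [Win 5 (Lose []),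
    Win 1 (Lose [])])]), Win 0 (Lose [Win 0 (Lose [Win 5 (Lose []), Win 5 (Lose [])]), Win 0 (Lose
    [Win 4 (Lose []), Win 1 (Lose [])]), Win 0 (Lose [Win 3 (Lose []), Win 1 (Lose [])]), Win 0
    (Lose [Win 5 (Lose []), Win 1 (Lose [])]), Win 0 (Lose [Win 5 (Lose []), Win 1 (Lose [])])]),
    Win 1 (Lose [Win 0 (Lose [Win 5 (Lose []), Win 1 (Lose [])]), Win 0 (Lose [Win 5 (Lose []),
    Win 1 (Lose [])]), Win 1 (Lose [Win 1 (Lose []), Win 1 (Lose [])]), Win 0 (Lose [Win 6 (Lose
    []), Win 6 (Lose [])]), Win 1 (Lose [Win 1 (Lose []), Win 1 (Lose [])])]), Win 1 (Lose [Win 0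
    (Lose [Win 0 (Lose [Win 0 (Lose [])]), Win 1 (Lose [])]), Win 0 (Lose [Win 0 (Lose [Win 0
    (Lose [])]), Win 1 (Lose [])]), Win 0 (Lose [Win 6 (Lose []), Win 6 (Lose [])]), Win 0 (Lose
    [Win 6 (Lose []), Win 0 (Lose [Win 0 (Lose [])])]), Win 0 (Lose [Win 6 (Lose []), Win 0 (Lose
    [Win 0 (Lose [])])])]), Win 1 (Lose [Win 0 (Lose [Win 4 (Lose []), Win 1 (Lose [])]), Win 0
    (Lose [Win 4 (Lose []), Win 1 (Lose [])]), Win 1 (Lose [Win 1 (Lose []), Win 1 (Lose [])]),
    Win 0 (Lose [Win 6 (Lose []), Win 0 (Lose [Win 0 (Lose [])])]), Win 1 (Lose [Win 1 (Lose []),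
    Win 1 (Lose [])])]), Win 1 (Lose [Win 0 (Lose [Win 3 (Lose []), Win 1 (Lose [])]), Win 0 (Lose
    [Win 3 (Lose []), Win 1 (Lose [])]), Win 1 (Lose [Win 1 (Lose []), Win 1 (Lose [])]), Win 0
    (Lose [Win 6 (Lose []), Win 6 (Lose [])]), Win 0 (Lose [Win 0 (Lose [Win 0 (Lose [])]), Win 6
    (Lose [])])]), Win 1 (Lose [Win 0 (Lose [Win 5 (Lose []), Win 1 (Lose [])]), Win 0 (Lose [Win
    5 (Lose []), Win 1 (Lose [])]), Win 0 (Lose [Win 6 (Lose []), Win 0 (Lose [Win 0 (Lose
    [])])]), Win 0 (Lose [Win 6 (Lose []), Win 6 (Lose [])]), Win 1 (Lose [Win 1 (Lose []), Win 1
    (Lose [])])]), Win 1 (Lose [Win 0 (Lose [Win 5 (Lose []), Win 1 (Lose [])]), Win 0 (Lose [Win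
    5 (Lose []), Win 1 (Lose [])]), Win 1 (Lose [Win 1 (Lose []), Win 1 (Lose [])]), Win 0 (Lose
    [Win 0 (Lose [Win 0 (Lose [])]), Win 6 (Lose [])]), Win 1 (Lose [Win 1 (Lose []), Win 1 (Lose
    [])])])]), Win 3 (Lose [Win 2 (Lose [Win 0 (Lose [Win 2 (Lose []), Win 1 (Lose [])]), Win 0
    (Lose [Win 2 (Lose []), Win 0 (Lose [Win 0 (Lose [])])]), Win 0 (Lose [Win 5 (Lose []), Win 5
    (Lose [])]), Win 0 (Lose [Win 5 (Lose []), Win 4 (Lose [])]), Win 0 (Lose [Win 5 (Lose []),
    Win 4 (Lose [])])]), Win 0 (Lose [Win 0 (Lose [Win 5 (Lose []), Win 1 (Lose [])]), Win 0 (Lose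
    [Win 5 (Lose []), Win 1 (Lose [])]), Win 0 (Lose [Win 1 (Lose []), Win 1 (Lose [])]), Win 1
    (Lose [Win 2 (Lose [Win 0 (Lose [])]), Win 0 (Lose [Win 0 (Lose [])]), Win 0 (Lose [Win 0
    (Lose [])])]), Win 0 (Lose [Win 1 (Lose []), Win 1 (Lose [])])]), Win 2 (Lose [Win 0 (Lose
    [Win 2 (Lose []), Win 0 (Lose [Win 0 (Lose [])])]), Win 0 (Lose [Win 2 (Lose []), Win 1 (Lose
    [])]), Win 0 (Lose [Win 5 (Lose []), Win 5 (Lose [])]), Win 0 (Lose [Win 5 (Lose []), Win 4
    (Lose [])]), Win 0 (Lose [Win 5 (Lose []), Win 4 (Lose [])])]), Win 2 (Lose [Win 0 (Lose [Win
    5 (Lose []), Win 5 (Lose [])]), Win 0 (Lose [Win 1 (Lose []), Win 1 (Lose [])]), Win 0 (Lose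
    [Win 5 (Lose []), Win 5 (Lose [])]), Win 0 (Lose [Win 5 (Lose []), Win 3 (Lose [])]), Win 0
    (Lose [Win 5 (Lose []), Win 3 (Lose [])])]), Win 2 (Lose [Win 0 (Lose [Win 5 (Lose []), Win 0
    (Lose [Win 0 (Lose [])])]), Win 1 (Lose [Win 2 (Lose [Win 0 (Lose [])]), Win 0 (Lose [Win 0
    (Lose [])]), Win 0 (Lose [Win 0 (Lose [])])]), Win 0 (Lose [Win 5 (Lose []), Win 0 (Lose [Win
    0 (Lose [])])]), Win 0 (Lose [Win 5 (Lose []), Win 3 (Lose [])]), Win 0 (Lose [Win 0 (Lose
    [Win 0 (Lose [])]), Win 3 (Lose [])])]), Win 2 (Lose [Win 0 (Lose [Win 5 (Lose []), Win 0
    (Lose [Win 0 (Lose [])])]), Win 0 (Lose [Win 1 (Lose []), Win 1 (Lose [])]), Win 0 (Lose [Win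
    5 (Lose []), Win 0 (Lose [Win 0 (Lose [])])]), Win 0 (Lose [Win 5 (Lose []), Win 3 (Lose
    [])]), Win 0 (Lose [Win 0 (Lose [Win 0 (Lose [])]), Win 3 (Lose [])])]), Win 2 (Lose [Win 0
    (Lose [Win 5 (Lose []), Win 5 (Lose [])]), Win 1 (Lose [Win 2 (Lose [Win 0 (Lose [])]), Win 0
    (Lose [Win 0 (Lose [])]), Win 0 (Lose [Win 0 (Lose [])])]), Win 0 (Lose [Win 5 (Lose []), Win
    5 (Lose [])]), Win 0 (Lose [Win 5 (Lose []), Win 3 (Lose [])]), Win 0 (Lose [Win 5 (Lose []),
    Win 3 (Lose [])])]), Win 0 (Lose [Win 1 (Lose [Win 5 (Lose []), Win 4 (Lose [])]), Win 0 (Lose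
    [Win 5 (Lose []), Win 3 (Lose [])]), Win 0 (Lose [Win 0 (Lose [Win 0 (Lose [])]), Win 3 (Lose
    [])]), Win 0 (Lose [Win 0 (Lose [Win 0 (Lose [])]), Win 3 (Lose [])]), Win 0 (Lose [Win 5
    (Lose []), Win 3 (Lose [])])])]), Win 4 (Lose [Win 0 (Lose [Win 0 (Lose [Win 4 (Lose []), Win
    4 (Lose [])]), Win 0 (Lose [Win 4 (Lose []), Win 2 (Lose [])]), Win 0 (Lose [Win 0 (Lose [Win
    0 (Lose [])]), Win 2 (Lose [])]), Win 0 (Lose [Win 4 (Lose []), Win 2 (Lose [])]), Win 0 (Lose
    [Win 4 (Lose []), Win 2 (Lose [])])]), Win 0 (Lose [Win 0 (Lose [Win 5 (Lose []), Win 5 (Lose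
    [])]), Win 0 (Lose [Win 5 (Lose []), Win 1 (Lose [])]), Win 0 (Lose [Win 0 (Lose [Win 0 (Lose
    [])]), Win 1 (Lose [])]), Win 0 (Lose [Win 5 (Lose []), Win 1 (Lose [])]), Win 0 (Lose [Win 5
    (Lose []), Win 1 (Lose [])])]), Win 0 (Lose [Win 0 (Lose [Win 5 (Lose []), Win 5 (Lose [])]),
    Win 0 (Lose [Win 5 (Lose []), Win 3 (Lose [])]), Win 0 (Lose [Win 0 (Lose [Win 0 (Lose [])]),
    Win 3 (Lose [])]), Win 0 (Lose [Win 5 (Lose []), Win 3 (Lose [])]), Win 0 (Lose [Win 5 (Lose
    []), Win 3 (Lose [])])]), Win 0 (Lose [Win 0 (Lose [Win 5 (Lose []), Win 5 (Lose [])]), Win 0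
    (Lose [Win 5 (Lose []), Win 3 (Lose [])]), Win 0 (Lose [Win 0 (Lose [Win 0 (Lose [])]), Win 3
    (Lose [])]), Win 0 (Lose [Win 5 (Lose []), Win 3 (Lose [])]), Win 0 (Lose [Win 5 (Lose []),
    Win 3 (Lose [])])]), Win 3 (Lose [Win 0 (Lose [Win 4 (Lose []), Win 2 (Lose [])]), Win 0 (Lose
    [Win 5 (Lose []), Win 1 (Lose [])]), Win 0 (Lose [Win 5 (Lose []), Win 3 (Lose [])]), Win 0
    (Lose [Win 5 (Lose []), Win 3 (Lose [])]), Win 0 (Lose [Win 3 (Lose []), Win 3 (Lose [])])]),
    Win 3 (Lose [Win 0 (Lose [Win 0 (Lose [Win 0 (Lose [])]), Win 2 (Lose [])]), Win 0 (Lose [Win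
    0 (Lose [Win 0 (Lose [])]), Win 1 (Lose [])]), Win 0 (Lose [Win 0 (Lose [Win 0 (Lose [])]),
    Win 3 (Lose [])]), Win 0 (Lose [Win 0 (Lose [Win 0 (Lose [])]), Win 3 (Lose [])]), Win 0 (Lose
    [Win 3 (Lose []), Win 3 (Lose [])])]), Win 3 (Lose [Win 0 (Lose [Win 4 (Lose []), Win 2 (Lose
    [])]), Win 0 (Lose [Win 5 (Lose []), Win 1 (Lose [])]), Win 0 (Lose [Win 5 (Lose []), Win 3
    (Lose [])]), Win 0 (Lose [Win 5 (Lose []), Win 3 (Lose [])]), Win 0 (Lose [Win 3 (Lose []),
    Win 3 (Lose [])])]), Win 3 (Lose [Win 0 (Lose [Win 4 (Lose []), Win 2 (Lose [])]), Win 0 (Lose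
    [Win 5 (Lose []), Win 1 (Lose [])]), Win 0 (Lose [Win 5 (Lose []), Win 3 (Lose [])]), Win 0
    (Lose [Win 5 (Lose []), Win 3 (Lose [])]), Win 0 (Lose [Win 3 (Lose []), Win 3 (Lose
    [])])])]), Win 6 (Lose [Win 0 (Lose [Win 0 (Lose [Win 4 (Lose []), Win 3 (Lose [])]), Win 0
    (Lose [Win 4 (Lose []), Win 2 (Lose [])]), Win 0 (Lose [Win 5 (Lose []), Win 0 (Lose [Win 0
    (Lose [])])]), Win 0 (Lose [Win 5 (Lose []), Win 4 (Lose [])]), Win 1 (Lose [Win 3 (Lose []),
    Win 2 (Lose [])])]), Win 0 (Lose [Win 0 (Lose [Win 5 (Lose []), Win 4 (Lose [])]), Win 0 (Lose
    [Win 4 (Lose []), Win 1 (Lose [])]), Win 1 (Lose [Win 2 (Lose [Win 0 (Lose [])]), Win 1 (Lose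
    [Win 0 (Lose [])]), Win 1 (Lose [Win 0 (Lose [])])]), Win 0 (Lose [Win 5 (Lose []), Win 1
    (Lose [])]), Win 0 (Lose [Win 4 (Lose []), Win 1 (Lose [])])]), Win 0 (Lose [Win 0 (Lose [Win
    5 (Lose []), Win 4 (Lose [])]), Win 0 (Lose [Win 5 (Lose []), Win 0 (Lose [Win 0 (Lose
    [])])]), Win 0 (Lose [Win 5 (Lose []), Win 0 (Lose [Win 0 (Lose [])])]), Win 0 (Lose [Win 5
    (Lose []), Win 4 (Lose [])]), Win 1 (Lose [Win 4 (Lose []), Win 3 (Lose [])])]), Win 2 (Lose
    [Win 0 (Lose [Win 4 (Lose []), Win 3 (Lose [])]), Win 1 (Lose [Win 1 (Lose [Win 0 (Lose [])]),
    Win 2 (Lose [Win 0 (Lose [])]), Win 1 (Lose [Win 0 (Lose [])])]), Win 0 (Lose [Win 5 (Lose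
    []), Win 4 (Lose [])]), Win 0 (Lose [Win 5 (Lose []), Win 3 (Lose [])]), Win 0 (Lose [Win 4
    (Lose []), Win 3 (Lose [])])]), Win 3 (Lose [Win 0 (Lose [Win 4 (Lose []), Win 2 (Lose [])]),
    Win 0 (Lose [Win 4 (Lose []), Win 1 (Lose [])]), Win 0 (Lose [Win 5 (Lose []), Win 0 (Lose
    [Win 0 (Lose [])])]), Win 0 (Lose [Win 5 (Lose []), Win 3 (Lose [])]), Win 1 (Lose [Win 2
    (Lose []), Win 1 (Lose [])])]), Win 3 (Lose [Win 0 (Lose [Win 5 (Lose []), Win 0 (Lose [Win 0
    (Lose [])])]), Win 1 (Lose [Win 2 (Lose [Win 0 (Lose [])]), Win 0 (Lose [Win 0 (Lose [])]),
    Win 0 (Lose [Win 0 (Lose [])])]), Win 0 (Lose [Win 5 (Lose []), Win 0 (Lose [Win 0 (Lose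
    [])])]), Win 0 (Lose [Win 5 (Lose []), Win 3 (Lose [])]), Win 0 (Lose [Win 0 (Lose [Win 0
    (Lose [])]), Win 3 (Lose [])])]), Win 4 (Lose [Win 0 (Lose [Win 4 (Lose []), Win 2 (Lose
    [])]), Win 0 (Lose [Win 5 (Lose []), Win 1 (Lose [])]), Win 0 (Lose [Win 5 (Lose []), Win 3
    (Lose [])]), Win 0 (Lose [Win 5 (Lose []), Win 3 (Lose [])]), Win 0 (Lose [Win 3 (Lose []),
    Win 3 (Lose [])])]), Win 4 (Lose [Win 0 (Lose [Win 3 (Lose []), Win 2 (Lose [])]), Win 0 (Lose
    [Win 4 (Lose []), Win 1 (Lose [])]), Win 0 (Lose [Win 4 (Lose []), Win 3 (Lose [])]), Win 0
    (Lose [Win 4 (Lose []), Win 3 (Lose [])]), Win 0 (Lose [Win 3 (Lose []), Win 3 (Lose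
    [])])])]), Win 2 (Lose [Win 2 (Lose [Win 1 (Lose [Win 2 (Lose []), Win 2 (Lose [])]), Win 0
    (Lose [Win 2 (Lose []), Win 1 (Lose [])]), Win 0 (Lose [Win 2 (Lose []), Win 1 (Lose [])]),
    Win 0 (Lose [Win 6 (Lose []), Win 1 (Lose [])]), Win 0 (Lose [Win 0 (Lose [Win 0 (Lose [])]),
    Win 1 (Lose [])])]), Win 2 (Lose [Win 1 (Lose [Win 2 (Lose []), Win 2 (Lose [])]), Win 0 (Lose
    [Win 2 (Lose []), Win 1 (Lose [])]), Win 0 (Lose [Win 2 (Lose []), Win 1 (Lose [])]), Win 0
    (Lose [Win 6 (Lose []), Win 1 (Lose [])]), Win 0 (Lose [Win 0 (Lose [Win 0 (Lose [])]), Win 1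
    (Lose [])])]), Win 1 (Lose [Win 0 (Lose [Win 3 (Lose []), Win 1 (Lose [])]), Win 0 (Lose [Win
    3 (Lose []), Win 1 (Lose [])]), Win 1 (Lose [Win 1 (Lose []), Win 1 (Lose [])]), Win 0 (Lose
    [Win 6 (Lose []), Win 6 (Lose [])]), Win 0 (Lose [Win 0 (Lose [Win 0 (Lose [])]), Win 6 (Lose
    [])])]), Win 1 (Lose [Win 0 (Lose [Win 2 (Lose []), Win 1 (Lose [])]), Win 0 (Lose [Win 2
    (Lose []), Win 1 (Lose [])]), Win 1 (Lose [Win 1 (Lose []), Win 1 (Lose [])]), Win 0 (Lose
    [Win 6 (Lose []), Win 5 (Lose [])]), Win 0 (Lose [Win 0 (Lose [Win 0 (Lose [])]), Win 5 (Lose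
    [])])]), Win 1 (Lose [Win 0 (Lose [Win 0 (Lose [Win 0 (Lose [])]), Win 1 (Lose [])]), Win 0
    (Lose [Win 0 (Lose [Win 0 (Lose [])]), Win 1 (Lose [])]), Win 1 (Lose [Win 1 (Lose []), Win 1
    (Lose [])]), Win 0 (Lose [Win 7 (Lose []), Win 0 (Lose [Win 0 (Lose [])])]), Win 0 (Lose [Win
    0 (Lose [Win 0 (Lose [])]), Win 0 (Lose [Win 0 (Lose [])])])]), Win 1 (Lose [Win 0 (Lose [Win
    4 (Lose []), Win 1 (Lose [])]), Win 0 (Lose [Win 4 (Lose []), Win 1 (Lose [])]), Win 1 (Lose
    [Win 1 (Lose []), Win 1 (Lose [])]), Win 0 (Lose [Win 7 (Lose []), Win 7 (Lose [])]), Win 0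
    (Lose [Win 0 (Lose [Win 0 (Lose [])]), Win 7 (Lose [])])]), Win 3 (Lose [Win 0 (Lose [Win 6
    (Lose []), Win 1 (Lose [])]), Win 0 (Lose [Win 6 (Lose []), Win 1 (Lose [])]), Win 0 (Lose
    [Win 6 (Lose []), Win 5 (Lose [])]), Win 0 (Lose [Win 6 (Lose []), Win 5 (Lose [])]), Win 0
    (Lose [Win 5 (Lose []), Win 5 (Lose [])])]), Win 3 (Lose [Win 0 (Lose [Win 0 (Lose [Win 0
    (Lose [])]), Win 1 (Lose [])]), Win 0 (Lose [Win 0 (Lose [Win 0 (Lose [])]), Win 1 (Lose
    [])]), Win 0 (Lose [Win 0 (Lose [Win 0 (Lose [])]), Win 5 (Lose [])]), Win 0 (Lose [Win 0
    (Lose [Win 0 (Lose [])]), Win 5 (Lose [])]), Win 0 (Lose [Win 5 (Lose []), Win 5 (Lose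
    [])])])]), Win 7 (Lose [Win 0 (Lose [Win 0 (Lose [Win 4 (Lose []), Win 3 (Lose [])]), Win 0
    (Lose [Win 5 (Lose []), Win 2 (Lose [])]), Win 0 (Lose [Win 5 (Lose []), Win 4 (Lose [])]),
    Win 0 (Lose [Win 5 (Lose []), Win 4 (Lose [])]), Win 0 (Lose [Win 4 (Lose []), Win 4 (Lose
    [])])]), Win 0 (Lose [Win 0 (Lose [Win 5 (Lose []), Win 4 (Lose [])]), Win 0 (Lose [Win 5
    (Lose []), Win 1 (Lose [])]), Win 1 (Lose [Win 1 (Lose [Win 0 (Lose [])]), Win 1 (Lose [Win 0
    (Lose [])]), Win 1 (Lose [Win 0 (Lose [])])]), Win 0 (Lose [Win 5 (Lose []), Win 1 (Lose
    [])]), Win 0 (Lose [Win 4 (Lose []), Win 1 (Lose [])])]), Win 0 (Lose [Win 0 (Lose [Win 5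
    (Lose []), Win 4 (Lose [])]), Win 0 (Lose [Win 6 (Lose []), Win 0 (Lose [Win 0 (Lose [])])]),
    Win 0 (Lose [Win 5 (Lose []), Win 4 (Lose [])]), Win 0 (Lose [Win 5 (Lose []), Win 4 (Lose
    [])]), Win 0 (Lose [Win 4 (Lose []), Win 4 (Lose [])])]), Win 0 (Lose [Win 0 (Lose [Win 5
    (Lose []), Win 4 (Lose [])]), Win 0 (Lose [Win 6 (Lose []), Win 3 (Lose [])]), Win 3 (Lose
    [Win 2 (Lose [Win 0 (Lose [])]), Win 3 (Lose [Win 0 (Lose [])]), Win 2 (Lose [Win 0 (Lose
    [])])]), Win 0 (Lose [Win 5 (Lose []), Win 3 (Lose [])]), Win 0 (Lose [Win 4 (Lose []), Win 3
    (Lose [])])]), Win 2 (Lose [Win 0 (Lose [Win 5 (Lose []), Win 1 (Lose [])]), Win 0 (Lose [Win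
    5 (Lose []), Win 1 (Lose [])]), Win 0 (Lose [Win 6 (Lose []), Win 5 (Lose [])]), Win 0 (Lose
    [Win 6 (Lose []), Win 0 (Lose [Win 0 (Lose [])])]), Win 1 (Lose [Win 1 (Lose []), Win 1 (Lose
    [])])]), Win 0 (Lose [Win 0 (Lose [Win 5 (Lose []), Win 4 (Lose [])]), Win 3 (Lose [Win 2
    (Lose [Win 0 (Lose [])]), Win 3 (Lose [Win 0 (Lose [])]), Win 2 (Lose [Win 0 (Lose [])])]),
    Win 0 (Lose [Win 6 (Lose []), Win 5 (Lose [])]), Win 0 (Lose [Win 6 (Lose []), Win 5 (Lose
    [])]), Win 0 (Lose [Win 5 (Lose []), Win 5 (Lose [])])]), Win 4 (Lose [Win 0 (Lose [Win 4
    (Lose []), Win 2 (Lose [])]), Win 0 (Lose [Win 5 (Lose []), Win 1 (Lose [])]), Win 0 (Lose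
    [Win 5 (Lose []), Win 3 (Lose [])]), Win 0 (Lose [Win 5 (Lose []), Win 3 (Lose [])]), Win 0
    (Lose [Win 3 (Lose []), Win 3 (Lose [])])]), Win 1 (Lose [Win 0 (Lose [Win 4 (Lose []), Win 4
    (Lose [])]), Win 0 (Lose [Win 3 (Lose []), Win 1 (Lose [])]), Win 0 (Lose [Win 2 (Lose []),
    Win 1 (Lose [])]), Win 0 (Lose [Win 4 (Lose []), Win 1 (Lose [])]), Win 0 (Lose [Win 4 (Lose
    []), Win 1 (Lose [])])])]), Win 8 (Lose [Win 1 (Lose [Win 0 (Lose [Win 4 (Lose []), Win 4
    (Lose [])]), Win 0 (Lose [Win 3 (Lose []), Win 1 (Lose [])]), Win 0 (Lose [Win 2 (Lose []),
    Win 1 (Lose [])]), Win 0 (Lose [Win 4 (Lose []), Win 1 (Lose [])]), Win 0 (Lose [Win 4 (Lose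
    []), Win 1 (Lose [])])]), Win 0 (Lose [Win 0 (Lose [Win 4 (Lose []), Win 4 (Lose [])]), Win 0
    (Lose [Win 3 (Lose []), Win 1 (Lose [])]), Win 0 (Lose [Win 2 (Lose []), Win 1 (Lose [])]),
    Win 0 (Lose [Win 4 (Lose []), Win 1 (Lose [])]), Win 0 (Lose [Win 4 (Lose []), Win 1 (Lose
    [])])]), Win 2 (Lose [Win 0 (Lose [Win 1 (Lose []), Win 0 (Lose [Win 0 (Lose [])])]), Win 0
    (Lose [Win 1 (Lose []), Win 1 (Lose [])]), Win 0 (Lose [Win 4 (Lose []), Win 4 (Lose [])]),
    Win 0 (Lose [Win 4 (Lose []), Win 3 (Lose [])]), Win 0 (Lose [Win 4 (Lose []), Win 3 (Lose
    [])])]), Win 0 (Lose [Win 0 (Lose [Win 4 (Lose []), Win 4 (Lose [])]), Win 0 (Lose [Win 4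
    (Lose []), Win 3 (Lose [])]), Win 0 (Lose [Win 0 (Lose [Win 0 (Lose [])]), Win 3 (Lose [])]),
    Win 0 (Lose [Win 4 (Lose []), Win 3 (Lose [])]), Win 0 (Lose [Win 4 (Lose []), Win 3 (Lose
    [])])]), Win 2 (Lose [Win 0 (Lose [Win 3 (Lose []), Win 1 (Lose [])]), Win 0 (Lose [Win 3
    (Lose []), Win 1 (Lose [])]), Win 1 (Lose [Win 1 (Lose []), Win 1 (Lose [])]), Win 0 (Lose
    [Win 5 (Lose []), Win 0 (Lose [Win 0 (Lose [])])]), Win 1 (Lose [Win 1 (Lose []), Win 1 (Lose
    [])])]), Win 2 (Lose [Win 0 (Lose [Win 2 (Lose []), Win 1 (Lose [])]), Win 0 (Lose [Win 2
    (Lose []), Win 1 (Lose [])]), Win 1 (Lose [Win 1 (Lose []), Win 1 (Lose [])]), Win 0 (Lose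
    [Win 5 (Lose []), Win 5 (Lose [])]), Win 0 (Lose [Win 0 (Lose [Win 0 (Lose [])]), Win 5 (Lose
    [])])]), Win 4 (Lose [Win 0 (Lose [Win 3 (Lose []), Win 2 (Lose [])]), Win 0 (Lose [Win 4
    (Lose []), Win 1 (Lose [])]), Win 0 (Lose [Win 4 (Lose []), Win 3 (Lose [])]), Win 0 (Lose
    [Win 4 (Lose []), Win 3 (Lose [])]), Win 0 (Lose [Win 3 (Lose []), Win 3 (Lose [])])]), Win 4
    (Lose [Win 0 (Lose [Win 3 (Lose []), Win 2 (Lose [])]), Win 0 (Lose [Win 4 (Lose []), Win 1
    (Lose [])]), Win 0 (Lose [Win 4 (Lose []), Win 3 (Lose [])]), Win 0 (Lose [Win 4 (Lose []),
    Win 3 (Lose [])]), Win 0 (Lose [Win 3 (Lose []), Win 3 (Lose [])])])])]))"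
    by (simp add: row_moves_def wrap_moves_def replicate_numeral)
  from wins_fuel_if_certifies_win[OF this] show ?thesis
    by (simp add: cells_openings)
qed

theorem mainTheorem14:
  shows "second_player_win 5 \<and> second_player_win 9 \<and> hepzibah_win 13"
proof -
  have "\<not> wins_fuel 5 11 Vera {}" "\<not> wins_fuel 9 19 Vera {}" "\<not> wins_fuel 13 27 Vera {}"
    using Vera_first_loses[OF _ Hepzibah_wins_after_Vera_opens_5]
      Vera_first_loses[OF _ Hepzibah_wins_after_Vera_opens_9]
      Vera_first_loses[OF _ Hepzibah_wins_after_Vera_opens_13]
    by simp_all
  moreover have "\<not> wins_fuel 5 11 Hepzibah {}" "\<not> wins_fuel 9 19 Hepzibah {}"
    using Hepzibah_first_loses[OF _ Vera_wins_after_Hepzibah_opens_5]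
      Hepzibah_first_loses[OF _ Vera_wins_after_Hepzibah_opens_9]
    by simp_all
  ultimately show ?thesis
    using Hepzibah_first_wins_13
    by (simp add: second_player_win_def hepzibah_win_def first_player_wins_def)
qed

end
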